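(* The function $\mathfrak F$ restricted to $[1,\infty)$ is a uniform continuation of the sequence $F$.
   Context: $F$: $F_1=1,F_2=2,F_{n+2}=F_{n+1}+F_n$; $\phi$ golden ratio; $\mathfrak F(x)=\frac{\phi}{\sqrt5}(\phi^x+\phi^{-x}\cos(\pi x)\phi^{-2})$, so $\mathfrak F(n)=F_n$. For an increasing sequence $H$ of positive integers, a continuous function $h:[1,\infty)\to\mathbb{R}$ is a uniform continuation of $H$ if $h(n)=H_n$ for all $n\in\mathbb{N}$ and the functions $h_n:[0,1]\to[0,1]$, $h_n(p)=\frac{h(n+p)-h(n)}{h(n+1)-h(n)}$, converge uniformly on $[0,1]$ to an increasing continuous function. *)

theory Defs
  imports "HOL-Analysis.Analysis"
begin

text \<open>Fibonacci numbers with F 1 = 1, F 2 = 2, F (n+2) = F (n+1) + F n (indexed from 1;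
  the value at 0 is the one forced by the recurrence, F 0 = 1, and is never used).\<close>
fun Fib :: "nat \<Rightarrow> nat" where
  "Fib 0 = 1"
| "Fib (Suc 0) = 1"
| "Fib (Suc (Suc n)) = Fib (Suc n) + Fib n"

definition phi :: real where
  "phi = (1 + sqrt 5) / 2"

definition frakF :: "real \<Rightarrow> real" where
  "frakF x = phi / sqrt 5 * (phi powr x + phi powr (-x) * cos (pi * x) * phi powr (-2))"

definition uniform_continuation :: "(nat \<Rightarrow> real) \<Rightarrow> (real \<Rightarrow> real) \<Rightarrow> bool" where
  "uniform_continuation H h \<longleftrightarrow>
     continuous_on {1..} h \<and>
     (\<forall>n\<ge>1. h (real n) = H n) \<and>
     (\<exists>g. continuous_on {0..1} g \<and> strict_mono_on {0..1} g \<and>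
          uniform_limit {0..1}
            (\<lambda>n p. (h (real n + p) - h (real n)) / (h (real n + 1) - h (real n)))
            g sequentially)"

end

theory Submission
  imports Defs "HOL-Number_Theory.Fib"
begin

(* At the integers the oscillating term of frakF turns it into Binet's formula, so frakF
   interpolates F. Away from the integers frakF x = c phi^x + O(phi^-x) with c = phi / sqrt 5,
   and the relative size of the error on [n, n+1] is O(phi^-2n). The normalised pieces of
   c phi^x are all equal to p \<mapsto> (phi^p - 1) / (phi - 1), hence those of frakF converge to it
   uniformly. *)

lemma Fib_eq_fib_Suc: "Fib n = fib (Suc n)"
  by (induction n rule: Fib.induct) auto

lemma phi_gt_1: "phi > 1"
  unfolding phi_def using real_sqrt_less_iff[of 1 5] by simp

lemma phi_times_conjugate: "phi * ((1 - sqrt 5) / 2) = -1"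
  unfolding phi_def by (simp add: field_simps)

lemma frakF_of_nat: "frakF (real n) = (phi ^ Suc n - ((1 - sqrt 5) / 2) ^ Suc n) / sqrt 5"
proof -
  have phi_pos: "phi > 0"
    using phi_gt_1 by simp
  have conjugate: "(1 - sqrt 5) / 2 = - 1 / phi"
    using phi_times_conjugate phi_pos by (simp add: field_simps)
  show ?thesis
    unfolding frakF_def conjugate using phi_pos
    by (simp add: powr_minus powr_realpow power_minus' field_simps power2_eq_square)
qed

lemma frakF_eq_Fib: "frakF (real n) = real (Fib n)"
  unfolding frakF_of_nat Fib_eq_fib_Suc fib_closed_form by (simp add: phi_def)

lemma abs_perturbed_ratio_minus_le:
  fixes a x y g M :: real
  assumes "a > 0" "\<bar>x\<bar> \<le> M" "\<bar>y\<bar> \<le> M" "0 \<le> g" "g \<le> 1" "2 * M \<le> a"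
  shows "\<bar>(a * g + x) / (a + y) - g\<bar> \<le> 4 * M / a"
proof -
  have denom: "a + y \<ge> a / 2"
    using assms by linarith
  have "\<bar>g * y\<bar> \<le> \<bar>y\<bar>"
    using assms(4,5) by (simp add: abs_mult mult_left_le_one_le)
  then have numer: "\<bar>x - g * y\<bar> \<le> 2 * M"
    using assms(2,3) by linarith
  have "(a * g + x) / (a + y) - g = (x - g * y) / (a + y)"
    using denom assms(1) by (simp add: field_simps)
  also have "\<bar>\<dots>\<bar> \<le> (2 * M) / (a / 2)"
    unfolding abs_divide using numer denom assms(1)
    by (intro frac_le) auto
  finally show ?thesis
    by simp
qed

lemma abs_piece_minus_powr_piece_le:
  fixes h :: "real \<Rightarrow> real"
  assumes b: "b > 1" and c: "c > 0" and p: "0 \<le> p" "p \<le> 1"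
    and close: "\<And>x. t \<le> x \<Longrightarrow> \<bar>h x - c * b powr x\<bar> \<le> \<epsilon>"
    and small: "4 * \<epsilon> \<le> c * b powr t * (b - 1)"
  shows "\<bar>(h (t + p) - h t) / (h (t + 1) - h t) - (b powr p - 1) / (b - 1)\<bar>
           \<le> 8 * \<epsilon> / (c * b powr t * (b - 1))"
proof -
  define a where "a = c * b powr t * (b - 1)"
  define g where "g q = (b powr q - 1) / (b - 1)" for q
  define R where "R x = h x - c * b powr x" for x
  have a_pos: "a > 0"
    unfolding a_def using b c by simp
  have increment: "h (t + q) - h t = a * g q + (R (t + q) - R t)" for q
    unfolding a_def g_def R_def using b by (simp add: powr_add field_simps)
  have R_increment: "\<bar>R (t + q) - R t\<bar> \<le> 2 * \<epsilon>" if "q \<ge> 0" for q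
    using close[of "t + q"] close[of t] that unfolding R_def by linarith
  have "g 1 = 1"
    unfolding g_def using b by simp
  moreover have "0 \<le> g p" "g p \<le> 1"
    unfolding g_def using b p powr_mono[of 0 p b] powr_mono[of p 1 b] by simp_all
  ultimately have "\<bar>(a * g p + (R (t + p) - R t)) / (a * g 1 + (R (t + 1) - R t)) - g p\<bar>
                    \<le> 4 * (2 * \<epsilon>) / a"
    using a_pos R_increment p small unfolding a_def
    by (simp only: mult_1_right, intro abs_perturbed_ratio_minus_le) auto
  then show ?thesis
    unfolding increment[symmetric] by (simp add: a_def g_def)
qed

lemma uniform_limit_pieces_of_perturbed_exponential:
  fixes h :: "real \<Rightarrow> real" and \<epsilon> :: "nat \<Rightarrow> real"
  assumes b: "b > 1" and c: "c > 0"
    and close: "\<And>n x. real n \<le> x \<Longrightarrow> \<bar>h x - c * b powr x\<bar> \<le> \<epsilon> n"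
    and decay: "(\<lambda>n. \<epsilon> n / b ^ n) \<longlonglongrightarrow> 0"
  shows "uniform_limit {0..1}
           (\<lambda>n p. (h (real n + p) - h (real n)) / (h (real n + 1) - h (real n)))
           (\<lambda>p. (b powr p - 1) / (b - 1)) sequentially"
proof (rule uniform_limitI)
  fix e :: real
  assume "e > 0"
  define \<delta> where "\<delta> n = 8 / (c * (b - 1)) * (\<epsilon> n / b ^ n)" for n
  have "\<delta> \<longlonglongrightarrow> 0"
    unfolding \<delta>_def by (rule tendsto_mult_right_zero[OF decay])
  then have "\<forall>\<^sub>F n in sequentially. \<delta> n < min e 2"
    using \<open>e > 0\<close> by (intro order_tendstoD(2)) auto
  then show "\<forall>\<^sub>F n in sequentially. \<forall>p\<in>{0..1}.
               dist ((h (real n + p) - h (real n)) / (h (real n + 1) - h (real n)))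
                    ((b powr p - 1) / (b - 1)) < e"
  proof eventually_elim
    case (elim n)
    define D where "D = c * b powr real n * (b - 1)"
    have D_pos: "D > 0"
      unfolding D_def using b c by simp
    have bound_eq: "8 * \<epsilon> n / D = \<delta> n"
      unfolding \<delta>_def D_def using b by (simp add: powr_realpow)
    have "8 * \<epsilon> n = \<delta> n * D"
      using bound_eq D_pos by (simp add: divide_eq_eq)
    moreover have "\<delta> n * D < 2 * D"
      using elim D_pos by (intro mult_strict_right_mono) auto
    ultimately have "4 * \<epsilon> n \<le> D"
      by linarith
    then show ?case
      using abs_piece_minus_powr_piece_le[OF b c _ _ close] elim bound_eq
      unfolding D_def by (fastforce simp: dist_real_def)
  qed
qed

lemma strict_mono_on_powr_piece:
  fixes b :: real
  assumes "b > 1"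
  shows "strict_mono_on A (\<lambda>p. (b powr p - 1) / (b - 1))"
  using assms by (intro strict_mono_onI divide_strict_right_mono) auto

lemma abs_frakF_minus_exponential_le:
  assumes "real n \<le> x"
  shows "\<bar>frakF x - phi / sqrt 5 * phi powr x\<bar> \<le> phi / sqrt 5 / phi ^ n"
proof -
  have "\<bar>frakF x - phi / sqrt 5 * phi powr x\<bar>
          = phi / sqrt 5 * (phi powr (- x) * \<bar>cos (pi * x)\<bar> * phi powr (- 2))"
    unfolding frakF_def using phi_gt_1 by (simp add: algebra_simps abs_mult)
  also have "\<dots> \<le> phi / sqrt 5 * (phi powr (- real n) * 1 * 1)"
    using phi_gt_1 assms
    by (intro mult_left_mono mult_mono powr_mono) (auto simp: powr_minus_divide)
  also have "phi powr (- real n) = 1 / phi ^ n"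
    using phi_gt_1 by (simp add: powr_minus_divide powr_realpow)
  finally show ?thesis
    by simp
qed

theorem lemma5p2:
  shows "uniform_continuation (\<lambda>n. real (Fib n)) frakF"
proof -
  have "continuous_on {1..} frakF"
    unfolding frakF_def using phi_gt_1 by (intro continuous_intros) auto
  moreover have "continuous_on {0..1} (\<lambda>p. (phi powr p - 1) / (phi - 1))"
    using phi_gt_1 by (intro continuous_intros) auto
  moreover have "(\<lambda>n. phi / sqrt 5 / phi ^ n / phi ^ n) \<longlonglongrightarrow> 0"
    using tendsto_mult[OF LIMSEQ_inverse_realpow_zero LIMSEQ_inverse_realpow_zero, OF phi_gt_1 phi_gt_1]
    by (simp add: divide_inverse mult.assoc tendsto_mult_right_zero)
  then have "uniform_limit {0..1}
               (\<lambda>n p. (frakF (real n + p) - frakF (real n)) / (frakF (real n + 1) - frakF (real n)))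
               (\<lambda>p. (phi powr p - 1) / (phi - 1)) sequentially"
    using phi_gt_1
    by (intro uniform_limit_pieces_of_perturbed_exponential[OF phi_gt_1 _
          abs_frakF_minus_exponential_le]) auto
  ultimately show ?thesis
    unfolding uniform_continuation_def
    using frakF_eq_Fib strict_mono_on_powr_piece[OF phi_gt_1] by blast
qed

end
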